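(* Let $a,b,c,d\ge1$ be integers and let $$M=\begin{bmatrix}a&-1&-1&-1\\-1&b&-1&-1\\-1&-1&c&-1\\-1&-1&-1&d\end{bmatrix}.$$ If $\det M=0$, then $\min\{a,b,c,d\}\le3$. *)

theory Defs
  imports "HOL-Analysis.Analysis"
begin

definition diag_minus_one_mat :: "int \<Rightarrow> int \<Rightarrow> int \<Rightarrow> int \<Rightarrow> int^4^4" where
  "diag_minus_one_mat a b c d =
     (\<chi> i j. if i = j then (if i = 1 then a else if i = 2 then b else if i = 3 then c else d)
             else -1)"

end

theory Submission
  imports Defs
begin

text \<open>Writing \<open>M\<close> as \<open>diag(a+1, b+1, c+1, d+1)\<close> minus the all-ones matrix, the
  determinant is \<open>A B C D (1 - 1/A - 1/B - 1/C - 1/D)\<close> with \<open>A = a+1\<close>, etc.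
  If \<open>a, b, c, d \<ge> 4\<close> then every \<open>1/A \<le> 1/5\<close>, so the bracket is at least \<open>1/5\<close>
  and the determinant cannot vanish.\<close>

lemma det_diag_minus_one_mat:
  "det (diag_minus_one_mat a b c d) =
     (a+1)*(b+1)*(c+1)*(d+1) -
     ((b+1)*(c+1)*(d+1) + (a+1)*(c+1)*(d+1) + (a+1)*(b+1)*(d+1) + (a+1)*(b+1)*(c+1))"
proof -
  have "finite {2::4, 3, 4}" "1 \<notin> {2::4, 3, 4}"
    and "finite {3::4, 4}" "2 \<notin> {3::4, 4}"
    and "finite {4::4}" "3 \<notin> {4::4}" by auto
  note expand = sum_over_permutations_insert[OF this(1,2)]
    sum_over_permutations_insert[OF this(3,4)] sum_over_permutations_insert[OF this(5,6)]
  show ?thesis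
    unfolding det_def UNIV_4 expand permutes_sing
    by (simp add: diag_minus_one_mat_def sign_swap_id permutation_swap_id sign_compose
        permutation_compose sign_id swap_id_eq algebra_simps)
qed

lemma triple_products_sum_less_product:
  fixes A B C D :: "'a::linordered_idom"
  assumes "A \<ge> 5" "B \<ge> 5" "C \<ge> 5" "D \<ge> 5"
  shows "B*C*D + A*C*D + A*B*D + A*B*C < A*B*C*D"
proof -
  have "5*(B*C*D) \<le> A*(B*C*D)" "5*(A*C*D) \<le> B*(A*C*D)"
    "5*(A*B*D) \<le> C*(A*B*D)" "5*(A*B*C) \<le> D*(A*B*C)"
    using assms by (intro mult_right_mono; simp)+
  moreover have "A*B*C*D > 0" using assms by simp
  ultimately show ?thesis by (simp add: algebra_simps)
qed

theorem lemma3p5: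
  fixes a b c d :: int
  assumes "a \<ge> 1" and "b \<ge> 1" and "c \<ge> 1" and "d \<ge> 1"
    and "det (diag_minus_one_mat a b c d) = 0"
  shows "min (min a b) (min c d) \<le> 3"
proof (rule ccontr)
  assume "\<not> ?thesis"
  then have "a+1 \<ge> 5" "b+1 \<ge> 5" "c+1 \<ge> 5" "d+1 \<ge> 5" by auto
  from triple_products_sum_less_product[OF this]
  have "det (diag_minus_one_mat a b c d) > 0"
    unfolding det_diag_minus_one_mat by linarith
  with assms(5) show False by simp
qed

end
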